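(* Let $G$ be a graph of order $n\geq 2$. Then $q_{2}(G)=n-2$ if and only if the complement $\overline{G}$ has a balanced bipartite component or has at least two bipartite components.
   Context: All graphs are finite and simple. For a graph $G$ with adjacency matrix $A$ and diagonal degree matrix $D$, the signless Laplacian is $Q(G)=A+D$; its eigenvalues are denoted $q_1(G)\geq q_2(G)\geq\cdots\geq q_n(G)$. $\overline{G}$ denotes the complement of $G$. A connected bipartite graph is called balanced if its two vertex classes have equal size, and unbalanced otherwise; an isolated vertex is considered to be an (unbalanced) bipartite component with one empty vertex class. A bipartite component of a graph means a connected component that is bipartite (including isolated vertices). *)

theory Defs
  imports "Jordan_Normal_Form.Char_Poly" "HOL-Computational_Algebra.Polynomial" "HOL-Library.Multiset"
begin

text \<open>A finite simple graph of order n: vertex set {0..<n}, adjacency given by a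
  symmetric irreflexive relation E (only its values on {0..<n} matter).\<close>

definition simple_graph :: "nat \<Rightarrow> (nat \<Rightarrow> nat \<Rightarrow> bool) \<Rightarrow> bool" where
  "simple_graph n E \<longleftrightarrow> (\<forall>i<n. \<forall>j<n. E i j \<longleftrightarrow> E j i) \<and> (\<forall>i<n. \<not> E i i)"

definition complement :: "nat \<Rightarrow> (nat \<Rightarrow> nat \<Rightarrow> bool) \<Rightarrow> nat \<Rightarrow> nat \<Rightarrow> bool" where
  "complement n E i j \<longleftrightarrow> i < n \<and> j < n \<and> i \<noteq> j \<and> \<not> E i j"

definition degree :: "nat \<Rightarrow> (nat \<Rightarrow> nat \<Rightarrow> bool) \<Rightarrow> nat \<Rightarrow> nat" where
  "degree n E i = card {j. j < n \<and> E i j}"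

definition signless_laplacian :: "nat \<Rightarrow> (nat \<Rightarrow> nat \<Rightarrow> bool) \<Rightarrow> real mat" where
  "signless_laplacian n E = mat n n (\<lambda>(i,j). (if i = j then real (degree n E i) else 0)
                                          + (if E i j then 1 else 0))"

text \<open>Eigenvalues of Q listed in non-increasing order with multiplicity
  (roots of the characteristic polynomial); q k G is the k-th one (1-based).\<close>
definition q_eig :: "nat \<Rightarrow> nat \<Rightarrow> (nat \<Rightarrow> nat \<Rightarrow> bool) \<Rightarrow> real" where
  "q_eig k n E = rev (sorted_list_of_multiset (proots (char_poly (signless_laplacian n E)))) ! (k - 1)"

definition adj_in :: "nat \<Rightarrow> (nat \<Rightarrow> nat \<Rightarrow> bool) \<Rightarrow> nat \<Rightarrow> nat \<Rightarrow> bool" where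
  "adj_in n E u v \<longleftrightarrow> u < n \<and> v < n \<and> E u v"

definition components :: "nat \<Rightarrow> (nat \<Rightarrow> nat \<Rightarrow> bool) \<Rightarrow> nat set set" where
  "components n E = {{u. u < n \<and> (adj_in n E)\<^sup>*\<^sup>* v u} | v. v < n}"

text \<open>The subgraph induced on C (a component) is bipartite with classes A, B
  (B may be empty, e.g. for an isolated vertex).\<close>
definition bipartition :: "(nat \<Rightarrow> nat \<Rightarrow> bool) \<Rightarrow> nat set \<Rightarrow> nat set \<Rightarrow> nat set \<Rightarrow> bool" where
  "bipartition E C A B \<longleftrightarrow> A \<inter> B = {} \<and> A \<union> B = C \<and>
     (\<forall>u\<in>C. \<forall>v\<in>C. E u v \<longrightarrow> (u \<in> A \<longleftrightarrow> v \<in> B))"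

definition bipartite_comp :: "(nat \<Rightarrow> nat \<Rightarrow> bool) \<Rightarrow> nat set \<Rightarrow> bool" where
  "bipartite_comp E C \<longleftrightarrow> (\<exists>A B. bipartition E C A B)"

definition balanced_comp :: "(nat \<Rightarrow> nat \<Rightarrow> bool) \<Rightarrow> nat set \<Rightarrow> bool" where
  "balanced_comp E C \<longleftrightarrow> (\<exists>A B. bipartition E C A B \<and> card A = card B)"

end

theory Submission
  imports Defs "Jordan_Normal_Form.Spectral_Radius" "Jordan_Normal_Form.Schur_Decomposition"
begin

(* Write Q = Q(G) and let F be the complement of G.  Entrywise Q(G) + Q(F) = J + (n-2) I, and
   x^T Q(F) x is half the edge energy  sum over edges ij of F of (x_i + x_j)^2  (each edge
   counted in both orientations), so

       x^T Q x = (sum x)^2 + (n-2) |x|^2 - energy_F(x) / 2.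

   Combined with the Courant-Fischer characterisation of the second eigenvalue this gives:
   (1) q_2 <= n - 2, testing on the hyperplane of zero-sum vectors;
   (2) if q_2 = n - 2, some nonzero zero-sum vector has zero energy, i.e. it takes opposite
       values at the ends of every edge of F; such a vector bipartitions each component it
       touches, and zero sum forces a balanced component or a second touched component;
   (3) conversely a balanced bipartite component (its sign vector and its indicator) or two
       bipartite components (their sign vectors) span a plane on which energy_F(x) is at most
       2 (sum x)^2, hence x^T Q x >= (n-2)|x|^2 there, so q_2 >= n - 2. *)

section \<open>Orthogonal diagonalisation of real symmetric matrices\<close>

definition real_symmetric :: "nat \<Rightarrow> real mat \<Rightarrow> bool" where
  "real_symmetric n A \<longleftrightarrow> A \<in> carrier_mat n n \<and> transpose_mat A = A"

definition real_orthogonal :: "nat \<Rightarrow> real mat \<Rightarrow> bool" where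
  "real_orthogonal n W \<longleftrightarrow>
     W \<in> carrier_mat n n \<and> transpose_mat W * W = 1\<^sub>m n \<and> W * transpose_mat W = 1\<^sub>m n"

definition diag_of_list :: "real list \<Rightarrow> real mat" where
  "diag_of_list es = mat (length es) (length es) (\<lambda>(i,j). if i = j then es ! i else 0)"

definition orth_diag :: "nat \<Rightarrow> real mat \<Rightarrow> real mat \<Rightarrow> real list \<Rightarrow> bool" where
  "orth_diag n A U es \<longleftrightarrow>
     real_orthogonal n U \<and> length es = n \<and> A = U * diag_of_list es * transpose_mat U"

lemma diag_of_list_carrier [simp]: "diag_of_list es \<in> carrier_mat (length es) (length es)"
  unfolding diag_of_list_def by auto

lemma real_symmetric_index:
  "real_symmetric n A \<Longrightarrow> i < n \<Longrightarrow> j < n \<Longrightarrow> A $$ (i,j) = A $$ (j,i)"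
  unfolding real_symmetric_def by (metis carrier_matD index_transpose_mat(1))

lemma real_symmetricI:
  assumes "A \<in> carrier_mat n n" and "\<And>i j. i < n \<Longrightarrow> j < n \<Longrightarrow> A $$ (i,j) = A $$ (j,i)"
  shows "real_symmetric n A"
  unfolding real_symmetric_def by (rule conjI, fact, rule eq_matI) (use assms in auto)

lemma real_symmetric_congruence:
  assumes A: "real_symmetric n A" and W: "W \<in> carrier_mat n n"
  shows "real_symmetric n (transpose_mat W * A * W)"
proof -
  have Ac: "A \<in> carrier_mat n n" and tA: "transpose_mat A = A"
    using A unfolding real_symmetric_def by auto
  have "transpose_mat (transpose_mat W * A * W) = transpose_mat W * transpose_mat (transpose_mat W * A)"
    using Ac W by (subst transpose_mult[of _ n n _ n]) auto
  also have "\<dots> = transpose_mat W * A * W"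
    using Ac W tA by (subst transpose_mult[of _ n n _ n]) (auto simp: assoc_mult_mat[of _ n n _ n _ n])
  finally show ?thesis unfolding real_symmetric_def using Ac W by auto
qed

lemma real_orthogonalI:
  assumes W: "W \<in> carrier_mat n n" and WtW: "transpose_mat W * W = 1\<^sub>m n"
  shows "real_orthogonal n W"
  using mat_mult_left_right_inverse[OF _ W WtW] W WtW unfolding real_orthogonal_def by auto

lemma real_orthogonal_mult:
  assumes W: "real_orthogonal n W" and V: "real_orthogonal n V"
  shows "real_orthogonal n (W * V)"
proof (rule real_orthogonalI)
  have Wc: "W \<in> carrier_mat n n" and Vc: "V \<in> carrier_mat n n"
    using W V unfolding real_orthogonal_def by auto
  show "W * V \<in> carrier_mat n n" using Wc Vc by auto
  have "transpose_mat (W * V) * (W * V) = transpose_mat V * ((transpose_mat W * W) * V)"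
    using Wc Vc by (simp add: transpose_mult[of _ n n _ n] assoc_mult_mat[of _ n n _ n _ n])
  also have "\<dots> = 1\<^sub>m n" using W V Vc unfolding real_orthogonal_def by simp
  finally show "transpose_mat (W * V) * (W * V) = 1\<^sub>m n" .
qed

text \<open>A real symmetric matrix has a real eigenvalue: a complex eigenvalue exists, and it is
  real because the Hermitian form of the matrix is real.\<close>
lemma real_symmetric_eigenvalue:
  assumes A: "real_symmetric n A" and n: "n > 0"
  shows "\<exists>e. eigenvalue A e"
proof -
  have Ar: "A \<in> carrier_mat n n" using A unfolding real_symmetric_def by auto
  define Ac where "Ac = map_mat complex_of_real A"
  have Ac: "Ac \<in> carrier_mat n n" using Ar unfolding Ac_def by auto
  from spectrum_non_empty[OF Ac n] obtain a where a: "eigenvalue Ac a" unfolding spectrum_def by auto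
  then obtain v where "eigenvector Ac v a" unfolding eigenvalue_def by auto
  hence v: "v \<in> carrier_vec n" "v \<noteq> 0\<^sub>v n" "Ac *\<^sub>v v = a \<cdot>\<^sub>v v"
    using Ac unfolding eigenvector_def by auto
  define s where "s = (\<Sum>i<n. \<Sum>j<n. cnj (v $ i) * Ac $$ (i,j) * v $ j)"
  define t where "t = (\<Sum>i<n. cnj (v $ i) * v $ i)"
  have "s = (\<Sum>i<n. cnj (v $ i) * (Ac *\<^sub>v v) $ i)"
    unfolding s_def using Ac v(1)
    by (auto simp: scalar_prod_def sum_distrib_left mult.assoc atLeast0LessThan intro!: sum.cong)
  also have "\<dots> = a * t" unfolding v(3) t_def using v(1)
    by (auto simp: sum_distrib_left intro!: sum.cong)
  finally have st: "s = a * t" .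
  have "cnj s = (\<Sum>i<n. \<Sum>j<n. v $ i * Ac $$ (i,j) * cnj (v $ j))"
    unfolding s_def using Ac Ar by (auto simp: Ac_def intro!: sum.cong)
  also have "\<dots> = (\<Sum>j<n. \<Sum>i<n. v $ i * Ac $$ (i,j) * cnj (v $ j))" by (rule sum.swap)
  also have "\<dots> = s" unfolding s_def using Ar real_symmetric_index[OF A]
    by (auto simp: Ac_def intro!: sum.cong)
  finally have cs: "cnj s = s" .
  have tr: "t = of_real (\<Sum>i<n. (cmod (v $ i))^2)" unfolding t_def
    by (simp add: complex_norm_square[symmetric] mult.commute del: of_real_power)
  obtain k where k: "k < n" "v $ k \<noteq> 0" using v(1,2) by (metis eq_vecI carrier_vecD index_zero_vec)
  have "(\<Sum>i<n. (cmod (v $ i))^2) > 0"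
    by (rule sum_pos2[of _ k]) (use k in auto)
  hence t0: "t \<noteq> 0" unfolding tr by (simp only: of_real_eq_0_iff)
  have "cnj a * cnj t = a * t" using cs st by simp
  moreover have "cnj t = t" using tr by simp
  ultimately have "cnj a = a" using t0 by simp
  hence "a = of_real (Re a)" by (metis Reals_cnj_iff complex_is_Real_iff of_real_Re)
  with a have "poly (char_poly Ac) (of_real (Re a)) = 0"
    using eigenvalue_root_char_poly[OF Ac] by auto
  also have "char_poly Ac = map_poly of_real (char_poly A)" unfolding Ac_def
    by (rule of_real_hom.char_poly_hom[OF Ar])
  finally have "poly (char_poly A) (Re a) = 0" by simp
  thus ?thesis using eigenvalue_root_char_poly[OF Ar] by auto
qed

lemma scalar_prod_self_pos:
  fixes x :: "real vec"
  shows "x \<in> carrier_vec n \<Longrightarrow> x \<noteq> 0\<^sub>v n \<Longrightarrow> x \<bullet> x > 0"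
  using conjugate_square_greater_0_vec[of x] by simp

lemma real_symmetric_unit_eigenvector:
  assumes A: "real_symmetric n A" and n: "n > 0"
  obtains e u where "u \<in> carrier_vec n" "u \<bullet> u = 1" "A *\<^sub>v u = e \<cdot>\<^sub>v u"
proof -
  have Ar: "A \<in> carrier_mat n n" using A unfolding real_symmetric_def by auto
  obtain e where "eigenvalue A e" using real_symmetric_eigenvalue[OF A n] by auto
  then obtain v where "eigenvector A v e" unfolding eigenvalue_def by auto
  hence v: "v \<in> carrier_vec n" "v \<noteq> 0\<^sub>v n" "A *\<^sub>v v = e \<cdot>\<^sub>v v"
    using Ar unfolding eigenvector_def by auto
  have vv: "v \<bullet> v > 0" using scalar_prod_self_pos[OF v(1,2)] .
  define u where "u = (1 / sqrt (v \<bullet> v)) \<cdot>\<^sub>v v"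
  have u: "u \<in> carrier_vec n" using v unfolding u_def by auto
  have "u \<bullet> u = (1 / sqrt (v \<bullet> v)) * ((1 / sqrt (v \<bullet> v)) * (v \<bullet> v))"
    unfolding u_def using v by (simp add: scalar_prod_smult_distrib smult_scalar_prod_distrib)
  also have "\<dots> = 1" using vv by (simp add: field_simps)
  finally have "u \<bullet> u = 1" .
  moreover have "A *\<^sub>v u = e \<cdot>\<^sub>v u" unfolding u_def using v Ar
    by (simp add: mult_mat_vec smult_smult_assoc mult.commute)
  ultimately show ?thesis using that u by blast
qed

lemma conjugate_real_vec [simp]: "conjugate (w :: real vec) = w"
  by (rule eq_vecI) auto

text \<open>Every unit vector is the first column of an orthogonal matrix
  (basis completion followed by Gram--Schmidt and normalisation).\<close>
lemma orthonormal_completion: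
  fixes u :: "real vec"
  assumes u: "u \<in> carrier_vec n" and uu: "u \<bullet> u = 1"
  obtains W where "real_orthogonal n W" "col W 0 = u"
proof -
  interpret cof_vec_space n "TYPE(real)" .
  have u0: "u \<noteq> 0\<^sub>v n" using uu u by auto
  have n: "n > 0" using u u0 by (metis carrier_vecD eq_vecI gr0I index_zero_vec(2) less_nat_zero_code)
  define b where "b = basis_completion u"
  define ws where "ws = gram_schmidt n b"
  from basis_completion[OF u u0, folded b_def]
  have dist_b: "distinct b" and indep: "\<not> lin_dep (set b)" and b: "set b \<subseteq> carrier_vec n"
    and hdb: "hd b = u" and len_b: "length b = n" by auto
  from hdb len_b n obtain vs where bv: "b = u # vs" by (cases b, auto)
  from gram_schmidt_result[OF b dist_b indep refl, folded ws_def]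
  have ws: "set ws \<subseteq> carrier_vec n" "corthogonal ws" "length ws = n" by (auto simp: len_b)
  from gram_schmidt_hd[OF u, of vs, folded bv] have hdws: "hd ws = u" unfolding ws_def .
  have wsc: "\<And>i. i < n \<Longrightarrow> ws ! i \<in> carrier_vec n" using ws by auto
  have orth: "\<And>i j. i < n \<Longrightarrow> j < n \<Longrightarrow> ws ! i \<bullet> ws ! j = 0 \<longleftrightarrow> i \<noteq> j"
    using corthogonalD[OF ws(2)] ws(3) by simp
  have pos: "\<And>i. i < n \<Longrightarrow> ws ! i \<bullet> ws ! i > 0"
    using orth wsc by (metis conjugate_real_vec conjugate_square_ge_0_vec order_le_less)
  define us where "us = map (\<lambda>w. (1 / sqrt (w \<bullet> w)) \<cdot>\<^sub>v w) ws"
  have lus: "length us = n" using ws unfolding us_def by auto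
  have usi: "\<And>i. i < n \<Longrightarrow> us ! i = (1 / sqrt (ws!i \<bullet> ws!i)) \<cdot>\<^sub>v ws!i"
    unfolding us_def using ws by auto
  have usc: "\<And>i. i < n \<Longrightarrow> us ! i \<in> carrier_vec n" using usi wsc by auto
  have orthonormal: "us ! i \<bullet> us ! j = (if i = j then 1 else 0)" if i: "i < n" and j: "j < n" for i j
  proof -
    have "us ! i \<bullet> us ! j = (1 / sqrt (ws!i \<bullet> ws!i)) * ((1 / sqrt (ws!j \<bullet> ws!j)) * (ws!i \<bullet> ws!j))"
      unfolding usi[OF i] usi[OF j] using wsc[OF i] wsc[OF j]
      by (simp add: scalar_prod_smult_distrib smult_scalar_prod_distrib)
    also have "\<dots> = (if i = j then 1 else 0)"
      using orth[OF i j] pos[OF i] by (auto simp: field_simps)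
    finally show ?thesis .
  qed
  have us0: "us ! 0 = u" using usi[OF n] hdws ws(3) n uu
    by (metis hd_conv_nth length_greater_0_conv one_smult_vec real_sqrt_one div_by_1)
  define W where "W = mat_of_cols n us"
  have W: "W \<in> carrier_mat n n" unfolding W_def using lus by auto
  have colW: "\<And>i. i < n \<Longrightarrow> col W i = us ! i" unfolding W_def using lus usc
    by (simp add: col_mat_of_cols)
  have "transpose_mat W * W = 1\<^sub>m n"
    by (rule eq_matI) (use W colW orthonormal in auto)
  with W have "real_orthogonal n W" by (rule real_orthogonalI)
  moreover have "col W 0 = u" using colW[OF n] us0 by simp
  ultimately show ?thesis using that by blast
qed

text \<open>One deflation step: conjugating by an orthogonal matrix whose first column is a unit
  eigenvector splits off a \<open>1 \<times> 1\<close> block, leaving a smaller symmetric matrix.\<close>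
lemma orthogonal_deflation:
  assumes A: "real_symmetric (Suc m) A"
  obtains W e A3 where "real_orthogonal (Suc m) W" "real_symmetric m A3"
    "transpose_mat W * A * W = four_block_mat (mat 1 1 (\<lambda>_. e)) (0\<^sub>m 1 m) (0\<^sub>m m 1) A3"
proof -
  define n where "n = Suc m"
  have Ar: "A \<in> carrier_mat n n" using A unfolding real_symmetric_def n_def by auto
  obtain e u where u: "u \<in> carrier_vec n" "u \<bullet> u = 1" "A *\<^sub>v u = e \<cdot>\<^sub>v u"
    unfolding n_def by (rule real_symmetric_unit_eigenvector[OF A zero_less_Suc])
  obtain W where W: "real_orthogonal n W" and W0: "col W 0 = u"
    using orthonormal_completion[OF u(1,2)] by auto
  have Wc: "W \<in> carrier_mat n n" and WtW: "transpose_mat W * W = 1\<^sub>m n"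
    using W unfolding real_orthogonal_def by auto
  define A' where "A' = transpose_mat W * A * W"
  have symA': "real_symmetric n A'"
    unfolding A'_def using real_symmetric_congruence[OF A[folded n_def] Wc] .
  have col0: "A' $$ (i,0) = (if i = 0 then e else 0)" if i: "i < n" for i
  proof -
    have "A' $$ (i,0) = col W i \<bullet> (A *\<^sub>v col W 0)"
      unfolding A'_def using Ar Wc i n_def
      by (simp add: assoc_mult_mat[of _ n n _ n _ n] index_mult_mat mult_mat_vec_def)
    also have "\<dots> = e * (col W i \<bullet> col W 0)"
      using W0 u Wc i by (metis col_dim scalar_prod_smult_distrib carrier_matD(1))
    also have "col W i \<bullet> col W 0 = (transpose_mat W * W) $$ (i,0)"
      using Wc i n_def by simp
    finally show ?thesis using WtW i n_def by simp
  qed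
  have row0: "A' $$ (0,j) = (if j = 0 then e else 0)" if "j < n" for j
    using real_symmetric_index[OF symA' _ that] col0[OF that] n_def by simp
  define A3 where "A3 = mat m m (\<lambda>(i,j). A' $$ (Suc i, Suc j))"
  have symA3: "real_symmetric m A3"
    by (rule real_symmetricI) (auto simp: A3_def n_def real_symmetric_index[OF symA'])
  have "A' = four_block_mat (mat 1 1 (\<lambda>_. e)) (0\<^sub>m 1 m) (0\<^sub>m m 1) A3"
    by (rule eq_matI)
      (use symA' col0 row0 in \<open>auto simp: A3_def n_def real_symmetric_def\<close>)
  with W symA3 show ?thesis using that unfolding A'_def n_def by blast
qed

lemma orth_diag_block:
  assumes "orth_diag m A3 U3 es3"
  shows "orth_diag (Suc m) (four_block_mat (mat 1 1 (\<lambda>_. e)) (0\<^sub>m 1 m) (0\<^sub>m m 1) A3)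
    (four_block_mat (1\<^sub>m 1) (0\<^sub>m 1 m) (0\<^sub>m m 1) U3) (e # es3)"
proof -
  have U3: "U3 \<in> carrier_mat m m" and U3o: "transpose_mat U3 * U3 = 1\<^sub>m m"
    and es3: "length es3 = m" and A3: "A3 = U3 * diag_of_list es3 * transpose_mat U3"
    using assms unfolding orth_diag_def real_orthogonal_def by auto
  define E1 where "E1 = mat 1 1 (\<lambda>_. e)"
  define D3 where "D3 = diag_of_list es3"
  have E1: "E1 \<in> carrier_mat 1 1" and D3: "D3 \<in> carrier_mat m m"
    unfolding E1_def D3_def using es3 by auto
  define F where "F = four_block_mat (1\<^sub>m 1) (0\<^sub>m 1 m) (0\<^sub>m m 1) U3"
  have F: "F \<in> carrier_mat (Suc m) (Suc m)" unfolding F_def using U3 by auto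
  have Ft: "transpose_mat F = four_block_mat (1\<^sub>m 1) (0\<^sub>m 1 m) (0\<^sub>m m 1) (transpose_mat U3)"
    unfolding F_def using U3 by (subst transpose_four_block_mat) auto
  have D: "diag_of_list (e # es3) = four_block_mat E1 (0\<^sub>m 1 m) (0\<^sub>m m 1) D3"
    unfolding E1_def D3_def
    by (rule eq_matI) (use es3 in \<open>auto simp: diag_of_list_def nth_Cons'\<close>)
  have "transpose_mat F * F = 1\<^sub>m (Suc m)"
    unfolding Ft unfolding F_def using U3 U3o by (subst mult_four_block_mat) auto
  with F have "real_orthogonal (Suc m) F" by (rule real_orthogonalI)
  moreover have "F * diag_of_list (e # es3) * transpose_mat F = four_block_mat E1 (0\<^sub>m 1 m) (0\<^sub>m m 1) A3"
    unfolding Ft D unfolding F_def A3 D3_def[symmetric] using U3 D3 E1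
    apply (subst mult_four_block_mat, auto)
    apply (subst mult_four_block_mat, auto)
    done
  ultimately show ?thesis unfolding orth_diag_def F_def E1_def using es3 by simp
qed

lemma orth_diag_congruence:
  assumes W: "real_orthogonal n W" and B: "orth_diag n B V es"
  shows "orth_diag n (W * B * transpose_mat W) (W * V) es"
proof -
  have Wc: "W \<in> carrier_mat n n" and Vc: "V \<in> carrier_mat n n" and es: "length es = n"
    and BV: "B = V * diag_of_list es * transpose_mat V"
    using W B unfolding orth_diag_def real_orthogonal_def by auto
  have D: "diag_of_list es \<in> carrier_mat n n" using es by auto
  have "W * B * transpose_mat W = (W * V) * diag_of_list es * transpose_mat (W * V)"
    unfolding BV using Wc Vc D
    by (simp add: transpose_mult[of _ n n _ n] assoc_mult_mat[of _ n n _ n _ n])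
  moreover have "real_orthogonal n (W * V)"
    using real_orthogonal_mult[OF W] B unfolding orth_diag_def by auto
  ultimately show ?thesis using es unfolding orth_diag_def by auto
qed

lemma real_orthogonal_undo:
  assumes W: "real_orthogonal n W" and A: "A \<in> carrier_mat n n"
  shows "W * (transpose_mat W * A * W) * transpose_mat W = A"
proof -
  have Wc: "W \<in> carrier_mat n n" and WWt: "W * transpose_mat W = 1\<^sub>m n"
    using W unfolding real_orthogonal_def by auto
  have "W * (transpose_mat W * A * W) * transpose_mat W = (W * transpose_mat W) * A * (W * transpose_mat W)"
    using Wc A by (simp add: assoc_mult_mat[of _ n n _ n _ n])
  thus ?thesis using A unfolding WWt by simp
qed

theorem real_symmetric_orth_diag:
  "real_symmetric n A \<Longrightarrow> \<exists>U es. orth_diag n A U es"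
proof (induction n arbitrary: A)
  case 0
  hence "A = 1\<^sub>m 0 * diag_of_list [] * transpose_mat (1\<^sub>m 0)"
    by (intro eq_matI) (auto simp: real_symmetric_def diag_of_list_def)
  thus ?case unfolding orth_diag_def real_orthogonal_def
    by (intro exI[of _ "1\<^sub>m 0"] exI[of _ "[]"]) auto
next
  case (Suc m A)
  obtain W e A3 where W: "real_orthogonal (Suc m) W" and A3: "real_symmetric m A3"
    and blk: "transpose_mat W * A * W = four_block_mat (mat 1 1 (\<lambda>_. e)) (0\<^sub>m 1 m) (0\<^sub>m m 1) A3"
    using orthogonal_deflation[OF Suc.prems] by blast
  obtain U3 es3 where D3: "orth_diag m A3 U3 es3" using Suc.IH[OF A3] by blast
  have "\<exists>U es. orth_diag (Suc m) (W * (transpose_mat W * A * W) * transpose_mat W) U es"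
    by (intro exI) (rule orth_diag_congruence[OF W orth_diag_block[OF D3, of e, folded blk]])
  moreover have "W * (transpose_mat W * A * W) * transpose_mat W = A"
    by (rule real_orthogonal_undo[OF W]) (use Suc.prems in \<open>simp add: real_symmetric_def\<close>)
  ultimately show ?case by (simp only:)
qed

lemma orth_diag_char_poly:
  assumes "orth_diag n A U es"
  shows "proots (char_poly A) = mset es"
proof -
  have U: "U \<in> carrier_mat n n" "transpose_mat U * U = 1\<^sub>m n" "U * transpose_mat U = 1\<^sub>m n"
    and es: "length es = n" and A: "A = U * diag_of_list es * transpose_mat U"
    using assms unfolding orth_diag_def real_orthogonal_def by auto
  have D: "diag_of_list es \<in> carrier_mat n n" using es by auto
  have "similar_mat_wit A (diag_of_list es) U (transpose_mat U)"
    unfolding similar_mat_wit_def Let_def using U D A by auto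
  hence "char_poly A = char_poly (diag_of_list es)"
    by (intro char_poly_similar) (auto simp: similar_mat_def)
  also have "\<dots> = (\<Prod>a\<leftarrow>diag_mat (diag_of_list es). [:- a, 1:])"
    by (rule char_poly_upper_triangular[OF D]) (auto simp: upper_triangular_def diag_of_list_def)
  also have "diag_mat (diag_of_list es) = es"
    by (rule nth_equalityI) (auto simp: diag_mat_def diag_of_list_def)
  finally have "char_poly A = (\<Prod>a\<leftarrow>es. [:- a, 1:])" .
  moreover have "proots (\<Prod>a\<leftarrow>es. [:- a, 1:]) = mset es"
  proof (induction es)
    case (Cons a es)
    have "(\<Prod>a\<leftarrow>es. [:- a, 1:]) \<noteq> 0" by (auto simp: prod_list_zero_iff)
    hence "proots ([:- a, 1:] * (\<Prod>a\<leftarrow>es. [:- a, 1:])) = proots [:- a, 1:] + mset es"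
      using Cons proots_mult by (metis pCons_eq_0_iff zero_neq_one)
    thus ?case by simp
  qed simp
  ultimately show ?thesis by simp
qed

lemma orth_diag_quadratic_form:
  assumes "orth_diag n A U es" and x: "x \<in> carrier_vec n"
  shows "x \<bullet> (A *\<^sub>v x) = (\<Sum>i<n. es!i * ((transpose_mat U *\<^sub>v x) $ i)^2)"
    and "x \<bullet> x = (\<Sum>i<n. ((transpose_mat U *\<^sub>v x) $ i)^2)"
proof -
  have U: "U \<in> carrier_mat n n" "U * transpose_mat U = 1\<^sub>m n"
    and es: "length es = n" and A: "A = U * diag_of_list es * transpose_mat U"
    using assms(1) unfolding orth_diag_def real_orthogonal_def by auto
  define z where "z = transpose_mat U *\<^sub>v x"
  have z: "z \<in> carrier_vec n" unfolding z_def using U x by auto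
  have D: "diag_of_list es \<in> carrier_mat n n" using es by auto
  have "A *\<^sub>v x = U *\<^sub>v (diag_of_list es *\<^sub>v z)" unfolding A z_def using U D x
    by (simp add: assoc_mult_mat_vec[of _ n n _ n])
  hence "x \<bullet> (A *\<^sub>v x) = z \<bullet> (diag_of_list es *\<^sub>v z)"
    using transpose_vec_mult_scalar[OF U(1), of "diag_of_list es *\<^sub>v z" x] D x z
    unfolding z_def by auto
  also have "\<dots> = (\<Sum>i<n. es!i * (z $ i)^2)"
    unfolding scalar_prod_def using z D es
    by (auto simp: diag_of_list_def mult_mat_vec_def scalar_prod_def power2_eq_square
        atLeast0LessThan if_distrib[where f="\<lambda>t. t * _"] cong: if_cong intro!: sum.cong)
  finally show "x \<bullet> (A *\<^sub>v x) = (\<Sum>i<n. es!i * ((transpose_mat U *\<^sub>v x) $ i)^2)"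
    unfolding z_def .
  have "x = U *\<^sub>v z" unfolding z_def using U x
    by (simp add: assoc_mult_mat_vec[symmetric, of _ n n _ n])
  hence "x \<bullet> x = z \<bullet> z"
    using transpose_vec_mult_scalar[OF U(1), of z x] x z unfolding z_def by metis
  also have "\<dots> = (\<Sum>i<n. (z $ i)^2)" unfolding scalar_prod_def using z
    by (auto simp: power2_eq_square atLeast0LessThan)
  finally show "x \<bullet> x = (\<Sum>i<n. ((transpose_mat U *\<^sub>v x) $ i)^2)" unfolding z_def .
qed

lemma sum_two_points:
  fixes g :: "nat \<Rightarrow> real"
  assumes "i < n" "j < n" "i \<noteq> j"
  shows "(\<Sum>k<n. g k * (vec n (\<lambda>k. if k = i then a else if k = j then b else 0) $ k)^2)
    = g i * a^2 + g j * b^2"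
proof -
  have "(\<Sum>k<n. g k * (vec n (\<lambda>k. if k = i then a else if k = j then b else 0) $ k)^2)
     = (\<Sum>k<n. (if k = i then g i * a^2 else 0) + (if k = j then g j * b^2 else 0))"
    using assms by (intro sum.cong) auto
  also have "\<dots> = g i * a^2 + g j * b^2" using assms by (simp add: sum.distrib)
  finally show ?thesis .
qed

lemma orth_diag_two_eigenvalues_above:
  assumes D: "orth_diag n A U es"
    and ij: "i < n" "j < n" "i \<noteq> j" and w: "w \<in> carrier_vec n"
  shows "\<exists>x \<in> carrier_vec n. x \<noteq> 0\<^sub>v n \<and> x \<bullet> w = 0 \<and> min (es!i) (es!j) * (x \<bullet> x) \<le> x \<bullet> (A *\<^sub>v x)"
proof -
  have U: "U \<in> carrier_mat n n" "transpose_mat U * U = 1\<^sub>m n"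
    using D unfolding orth_diag_def real_orthogonal_def by auto
  define t where "t = transpose_mat U *\<^sub>v w"
  define a where "a = (if t $ i = 0 \<and> t $ j = 0 then 1 else t $ j)"
  define b where "b = (if t $ i = 0 \<and> t $ j = 0 then 0 else - t $ i)"
  have ab: "a \<noteq> 0 \<or> b \<noteq> 0" and tab: "t $ i * a + t $ j * b = 0"
    unfolding a_def b_def by auto
  define z where "z = vec n (\<lambda>k. if k = i then a else if k = j then b else 0)"
  have z: "z \<in> carrier_vec n" unfolding z_def by auto
  define x where "x = U *\<^sub>v z"
  have x: "x \<in> carrier_vec n" unfolding x_def using U z by auto
  have tx: "transpose_mat U *\<^sub>v x = z" unfolding x_def using U z
    by (simp add: assoc_mult_mat_vec[symmetric, of _ n n _ n])
  have "x \<bullet> w = w \<bullet> x" using x w by (rule comm_scalar_prod)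
  also have "\<dots> = t \<bullet> z" unfolding x_def t_def by (rule transpose_vec_mult_scalar[OF U(1) z w, symmetric])
  also have "\<dots> = (\<Sum>k<n. t $ k * z $ k)"
    unfolding scalar_prod_def using z by (simp add: atLeast0LessThan)
  also have "\<dots> = (\<Sum>k<n. (if k = i then t $ i * a else 0) + (if k = j then t $ j * b else 0))"
    unfolding z_def using ij by (intro sum.cong) auto
  also have "\<dots> = 0" using ij tab by (simp add: sum.distrib)
  finally have xw: "x \<bullet> w = 0" .
  have x0: "x \<noteq> 0\<^sub>v n"
  proof
    assume "x = 0\<^sub>v n"
    hence "z = 0\<^sub>v n" using tx U by auto
    hence "z $ i = 0" "z $ j = 0" using ij by auto
    thus False using ab ij unfolding z_def by auto
  qed
  have "x \<bullet> (A *\<^sub>v x) = es!i * a^2 + es!j * b^2"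
    using orth_diag_quadratic_form(1)[OF D x] sum_two_points[OF ij, of "\<lambda>k. es!k"]
    unfolding tx z_def by simp
  moreover have "x \<bullet> x = a^2 + b^2"
    using orth_diag_quadratic_form(2)[OF D x] sum_two_points[OF ij, of "\<lambda>k. 1"]
    unfolding tx z_def by simp
  ultimately have "min (es!i) (es!j) * (x \<bullet> x) \<le> x \<bullet> (A *\<^sub>v x)"
    by (smt (verit) distrib_left min_def mult_right_mono zero_le_power2)
  thus ?thesis using x x0 xw by blast
qed

text \<open>If all eigenvalues but one are at most \<open>c\<close>, every plane contains a nonzero vector
  with Rayleigh quotient at most \<open>c\<close> (the one orthogonal to the exceptional eigenvector).\<close>
lemma orth_diag_plane_below:
  assumes D: "orth_diag n A U es" and i0: "i0 < n"
    and small: "\<And>k. k < n \<Longrightarrow> k \<noteq> i0 \<Longrightarrow> es!k \<le> c"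
    and x: "x \<in> carrier_vec n" and y: "y \<in> carrier_vec n"
    and x0: "x \<noteq> 0\<^sub>v n" and y0: "y \<noteq> 0\<^sub>v n" and xy: "x \<bullet> y = 0"
  shows "\<exists>a b. a \<cdot>\<^sub>v x + b \<cdot>\<^sub>v y \<noteq> 0\<^sub>v n \<and>
    (a \<cdot>\<^sub>v x + b \<cdot>\<^sub>v y) \<bullet> (A *\<^sub>v (a \<cdot>\<^sub>v x + b \<cdot>\<^sub>v y)) \<le> c * ((a \<cdot>\<^sub>v x + b \<cdot>\<^sub>v y) \<bullet> (a \<cdot>\<^sub>v x + b \<cdot>\<^sub>v y))"
proof -
  have U: "U \<in> carrier_mat n n" using D unfolding orth_diag_def real_orthogonal_def by auto
  define tx where "tx = transpose_mat U *\<^sub>v x"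
  define ty where "ty = transpose_mat U *\<^sub>v y"
  define a where "a = (if tx $ i0 = 0 \<and> ty $ i0 = 0 then 1 else ty $ i0)"
  define b where "b = (if tx $ i0 = 0 \<and> ty $ i0 = 0 then 0 else - tx $ i0)"
  have ab: "a \<noteq> 0 \<or> b \<noteq> 0" unfolding a_def b_def by auto
  define v where "v = a \<cdot>\<^sub>v x + b \<cdot>\<^sub>v y"
  have v: "v \<in> carrier_vec n" unfolding v_def using x y by auto
  define z where "z = transpose_mat U *\<^sub>v v"
  have "z = a \<cdot>\<^sub>v tx + b \<cdot>\<^sub>v ty" unfolding z_def v_def tx_def ty_def using U x y
    by (simp add: mult_add_distrib_mat_vec[of _ n n] mult_mat_vec[of _ n n])
  hence zi0: "z $ i0 = 0" using i0 U x y unfolding a_def b_def tx_def ty_def by auto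
  have "v \<bullet> x = a * (x \<bullet> x)" "v \<bullet> y = b * (y \<bullet> y)" unfolding v_def using x y xy
    by (simp_all add: add_scalar_prod_distrib[of _ n] smult_scalar_prod_distrib[of _ n]
        comm_scalar_prod[of y n x])
  hence v0: "v \<noteq> 0\<^sub>v n"
    using ab x y scalar_prod_self_pos[OF x x0] scalar_prod_self_pos[OF y y0] by auto
  have "(\<Sum>k<n. es!k * (z $ k)^2) \<le> (\<Sum>k<n. c * (z $ k)^2)"
  proof (rule sum_mono)
    fix k assume "k \<in> {..<n}"
    thus "es!k * (z $ k)^2 \<le> c * (z $ k)^2"
      using zi0 mult_right_mono[OF small zero_le_power2] by (cases "k = i0") auto
  qed
  hence "v \<bullet> (A *\<^sub>v v) \<le> c * (v \<bullet> v)"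
    using orth_diag_quadratic_form[OF D v] unfolding z_def by (simp add: sum_distrib_left)
  thus ?thesis using v0 unfolding v_def by blast
qed

section \<open>The second eigenvalue and Courant--Fischer\<close>

definition second_eigenvalue :: "real mat \<Rightarrow> real" where
  "second_eigenvalue A = rev (sorted_list_of_multiset (proots (char_poly A))) ! 1"

lemma second_eigenvalue_orth_diag:
  "orth_diag n A U es \<Longrightarrow> second_eigenvalue A = rev (sort es) ! 1"
  unfolding second_eigenvalue_def by (simp add: orth_diag_char_poly)

lemma rev_sort_antimono:
  fixes es :: "real list"
  assumes "k < length es" "l \<le> k"
  shows "rev (sort es) ! k \<le> rev (sort es) ! l"
proof -
  have "rev (sort es) ! k = sort es ! (length es - Suc k)" using assms by (simp add: rev_nth)
  also have "\<dots> \<le> sort es ! (length es - Suc l)"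
    using assms by (intro sorted_nth_mono) auto
  also have "\<dots> = rev (sort es) ! l" using assms by (simp add: rev_nth)
  finally show ?thesis .
qed

lemma card_entries_rev_sort:
  "card {i. i < length es \<and> P (es ! i)} = card {i. i < length es \<and> P (rev (sort es) ! i)}"
proof -
  have "length (filter P es) = length (filter P (rev (sort es)))"
    by (metis mset_filter mset_rev mset_sort size_mset)
  thus ?thesis unfolding length_filter_conv_card by simp
qed

lemma two_entries_at_least_second:
  fixes es :: "real list"
  assumes len: "length es \<ge> 2"
  obtains i j where "i < length es" "j < length es" "i \<noteq> j"
    "rev (sort es) ! 1 \<le> es ! i" "rev (sort es) ! 1 \<le> es ! j"
proof -
  let ?S = "{i. i < length es \<and> rev (sort es) ! 1 \<le> es ! i}"
  have "{0, 1} \<subseteq> {i. i < length es \<and> rev (sort es) ! 1 \<le> rev (sort es) ! i}"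
    using len rev_sort_antimono[of 1 es 0] by auto
  hence "card {0::nat, 1} \<le> card {i. i < length es \<and> rev (sort es) ! 1 \<le> rev (sort es) ! i}"
    by (intro card_mono) auto
  hence two: "2 \<le> card ?S" unfolding card_entries_rev_sort by simp
  hence "?S \<noteq> {}" using card_gt_0_iff[of ?S] by linarith
  then obtain i where i: "i \<in> ?S" by blast
  have "1 \<le> card (?S - {i})" using two i by (simp add: card_Diff_singleton)
  hence "?S - {i} \<noteq> {}" using card_gt_0_iff[of "?S - {i}"] by linarith
  then obtain j where "j \<in> ?S - {i}" by blast
  thus ?thesis using that i by blast
qed

lemma all_but_one_at_most_second:
  fixes es :: "real list"
  assumes len: "length es \<ge> 2"
  obtains i0 where "i0 < length es" "\<And>k. k < length es \<Longrightarrow> k \<noteq> i0 \<Longrightarrow> es ! k \<le> rev (sort es) ! 1"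
proof -
  let ?S = "{k. k < length es \<and> rev (sort es) ! 1 < es ! k}"
  let ?T = "{k. k < length es \<and> rev (sort es) ! 1 < rev (sort es) ! k}"
  have "?T \<subseteq> {0}"
  proof
    fix k assume k: "k \<in> ?T"
    show "k \<in> {0}"
    proof (rule ccontr)
      assume "k \<notin> {0}"
      hence "rev (sort es) ! k \<le> rev (sort es) ! 1" using k rev_sort_antimono[of k es 1] by simp
      thus False using k by simp
    qed
  qed
  hence "card ?T \<le> card {0::nat}" by (intro card_mono) simp_all
  hence "card ?S \<le> Suc 0" unfolding card_entries_rev_sort by simp
  hence at_most_one: "\<forall>k\<in>?S. \<forall>l\<in>?S. k = l" using card_le_Suc0_iff_eq[of ?S] by simp
  show ?thesis
  proof (cases "?S = {}")
    case True
    show ?thesis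
    proof (rule that[of 0])
      show "0 < length es" using len by linarith
      fix k assume "k < length es"
      moreover have "k \<notin> ?S" using True by blast
      ultimately show "es ! k \<le> rev (sort es) ! 1" by simp
    qed
  next
    case False
    then obtain i0 where i0: "i0 \<in> ?S" by blast
    show ?thesis
    proof (rule that[of i0])
      show "i0 < length es" using i0 by simp
      fix k assume "k < length es" "k \<noteq> i0"
      hence "k \<notin> ?S" using at_most_one i0 by blast
      thus "es ! k \<le> rev (sort es) ! 1" using \<open>k < length es\<close> by simp
    qed
  qed
qed

theorem second_eigenvalue_max_min:
  assumes A: "real_symmetric n A" and n: "2 \<le> n" and w: "w \<in> carrier_vec n"
  shows "\<exists>x \<in> carrier_vec n. x \<noteq> 0\<^sub>v n \<and> x \<bullet> w = 0 \<and>
    second_eigenvalue A * (x \<bullet> x) \<le> x \<bullet> (A *\<^sub>v x)"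
proof -
  obtain U es where D: "orth_diag n A U es" using real_symmetric_orth_diag[OF A] by blast
  have len: "length es = n" using D unfolding orth_diag_def by simp
  have "2 \<le> length es" using n len by simp
  then obtain i j where ij: "i < length es" "j < length es" "i \<noteq> j"
    and above: "rev (sort es) ! 1 \<le> es ! i" "rev (sort es) ! 1 \<le> es ! j"
    by (rule two_entries_at_least_second)
  obtain x where x: "x \<in> carrier_vec n" "x \<noteq> 0\<^sub>v n" "x \<bullet> w = 0"
    and Rx: "min (es!i) (es!j) * (x \<bullet> x) \<le> x \<bullet> (A *\<^sub>v x)"
    using orth_diag_two_eigenvalues_above[OF D ij[unfolded len] w] by blast
  have "second_eigenvalue A * (x \<bullet> x) \<le> min (es!i) (es!j) * (x \<bullet> x)"
    unfolding second_eigenvalue_orth_diag[OF D]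
    using above scalar_prod_self_pos[OF x(1,2)] by (intro mult_right_mono) auto
  thus ?thesis using x Rx by auto
qed

theorem second_eigenvalue_min_max:
  assumes A: "real_symmetric n A" and n: "2 \<le> n"
    and x: "x \<in> carrier_vec n" and y: "y \<in> carrier_vec n"
    and x0: "x \<noteq> 0\<^sub>v n" and y0: "y \<noteq> 0\<^sub>v n" and xy: "x \<bullet> y = 0"
  shows "\<exists>a b. a \<cdot>\<^sub>v x + b \<cdot>\<^sub>v y \<noteq> 0\<^sub>v n \<and>
    (a \<cdot>\<^sub>v x + b \<cdot>\<^sub>v y) \<bullet> (A *\<^sub>v (a \<cdot>\<^sub>v x + b \<cdot>\<^sub>v y))
      \<le> second_eigenvalue A * ((a \<cdot>\<^sub>v x + b \<cdot>\<^sub>v y) \<bullet> (a \<cdot>\<^sub>v x + b \<cdot>\<^sub>v y))"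
proof -
  obtain U es where D: "orth_diag n A U es" using real_symmetric_orth_diag[OF A] by blast
  have len: "length es = n" using D unfolding orth_diag_def by simp
  have "2 \<le> length es" using n len by simp
  then obtain i0 where "i0 < length es" "\<And>k. k < length es \<Longrightarrow> k \<noteq> i0 \<Longrightarrow> es ! k \<le> rev (sort es) ! 1"
    by (rule all_but_one_at_most_second) blast+
  from orth_diag_plane_below[OF D this[unfolded len] x y x0 y0 xy]
  show ?thesis unfolding second_eigenvalue_orth_diag[OF D] .
qed

section \<open>The signless Laplacian of a graph and of its complement\<close>

text \<open>The edge energy \<open>\<Sum>\<^bsub>ij \<in> E\<^esub> (x\<^sub>i + x\<^sub>j)\<^sup>2\<close> (each edge counted in both orientations);
  it is twice the quadratic form of the signless Laplacian.\<close>
definition edge_energy :: "nat \<Rightarrow> (nat \<Rightarrow> nat \<Rightarrow> bool) \<Rightarrow> real vec \<Rightarrow> real" where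
  "edge_energy n F x = (\<Sum>i<n. \<Sum>j<n. if F i j then (x $ i + x $ j)^2 else 0)"

lemma edge_energy_nonneg: "edge_energy n F x \<ge> 0"
  unfolding edge_energy_def by (intro sum_nonneg) auto

lemma quadratic_form_sum:
  fixes A :: "real mat"
  assumes A: "A \<in> carrier_mat n n" and x: "x \<in> carrier_vec n"
  shows "x \<bullet> (A *\<^sub>v x) = (\<Sum>i<n. \<Sum>j<n. x $ i * A $$ (i,j) * x $ j)"
  using A x by (auto simp: scalar_prod_def mult_mat_vec_def sum_distrib_left atLeast0LessThan
      mult.assoc intro!: sum.cong)

lemma signless_laplacian_carrier [simp]: "signless_laplacian n F \<in> carrier_mat n n"
  unfolding signless_laplacian_def by auto

lemma signless_laplacian_index:
  "i < n \<Longrightarrow> j < n \<Longrightarrow> signless_laplacian n F $$ (i,j) =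
    (if i = j then real (degree n F i) else 0) + (if F i j then 1 else 0)"
  unfolding signless_laplacian_def by auto

lemma signless_laplacian_symmetric:
  "simple_graph n E \<Longrightarrow> real_symmetric n (signless_laplacian n E)"
  by (rule real_symmetricI) (auto simp: signless_laplacian_index simple_graph_def)

lemma degree_as_sum: "real (degree n F i) = (\<Sum>j<n. if F i j then 1 else 0)"
proof -
  have "(\<Sum>j<n. if F i j then 1 else (0::real)) = real (card ({..<n} \<inter> Collect (F i)))"
    by (simp add: sum.If_cases)
  also have "{..<n} \<inter> Collect (F i) = {j. j < n \<and> F i j}" by auto
  finally show ?thesis unfolding degree_def by (simp only:)
qed

lemma signless_laplacian_quadratic_form:
  assumes x: "x \<in> carrier_vec n" and sym: "\<And>i j. i < n \<Longrightarrow> j < n \<Longrightarrow> F i j = F j i"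
  shows "x \<bullet> (signless_laplacian n F *\<^sub>v x) = edge_energy n F x / 2"
proof -
  let ?sq_i = "\<Sum>i<n. \<Sum>j<n. if F i j then (x $ i)^2 else 0"
  let ?sq_j = "\<Sum>i<n. \<Sum>j<n. if F i j then (x $ j)^2 else 0"
  let ?mixed = "\<Sum>i<n. \<Sum>j<n. if F i j then x $ i * x $ j else 0"
  have "x \<bullet> (signless_laplacian n F *\<^sub>v x) = (\<Sum>i<n. \<Sum>j<n. x $ i *
      ((if i = j then real (degree n F i) else 0) + (if F i j then 1 else 0)) * x $ j)"
    using quadratic_form_sum[OF signless_laplacian_carrier x] signless_laplacian_index by simp
  also have "\<dots> = (\<Sum>i<n. real (degree n F i) * (x $ i)^2) + ?mixed"
    by (simp add: algebra_simps sum.distrib power2_eq_square if_distrib[where f="\<lambda>t. _ * t"]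
        if_distrib[where f="\<lambda>t. t * _"] cong: if_cong)
  also have "(\<Sum>i<n. real (degree n F i) * (x $ i)^2) = ?sq_i"
    unfolding degree_as_sum
    by (simp add: sum_distrib_right if_distrib[where f="\<lambda>t. t * _"] cong: if_cong)
  finally have xQx: "x \<bullet> (signless_laplacian n F *\<^sub>v x) = ?sq_i + ?mixed" .
  have swap: "?sq_i = ?sq_j"
    by (subst sum.swap) (auto intro!: sum.cong simp: sym)
  have expand: "(if F i j then (x $ i + x $ j)^2 else 0) = (if F i j then (x $ i)^2 else 0)
      + (if F i j then (x $ j)^2 else 0) + 2 * (if F i j then x $ i * x $ j else 0)" for i j
    by (auto simp: power2_eq_square algebra_simps)
  have "edge_energy n F x = ?sq_i + ?sq_j + 2 * ?mixed"
    unfolding edge_energy_def expand by (simp only: sum.distrib sum_distrib_left)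
  thus ?thesis unfolding xQx using swap by simp
qed

text \<open>Every other vertex is a neighbour either in \<open>G\<close> or in its complement.\<close>
lemma degree_add_complement:
  assumes sg: "simple_graph n E" and i: "i < n"
  shows "real (degree n E i) + real (degree n (complement n E) i) = real n - 1"
proof -
  have irr: "\<not> E i i" using sg i unfolding simple_graph_def by auto
  have disj: "{j. j < n \<and> E i j} \<inter> {j. j < n \<and> complement n E i j} = {}"
    unfolding complement_def by auto
  have union: "{j. j < n \<and> E i j} \<union> {j. j < n \<and> complement n E i j} = {..<n} - {i}"
    unfolding complement_def using irr i by auto
  have "degree n E i + degree n (complement n E) i = card ({..<n} - {i})"
    unfolding degree_def union[symmetric] by (subst card_Un_disjoint) (use disj in auto)
  also have "\<dots> = n - 1" using i by simp
  finally show ?thesis using i by (simp add: of_nat_diff flip: of_nat_add)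
qed

lemma signless_laplacian_add_complement:
  assumes sg: "simple_graph n E" and i: "i < n" and j: "j < n"
  shows "signless_laplacian n E $$ (i,j) + signless_laplacian n (complement n E) $$ (i,j)
     = 1 + (if i = j then real n - 2 else 0)"
proof (cases "i = j")
  case True
  have irr: "\<not> E i i" using sg i unfolding simple_graph_def by auto
  show ?thesis using True degree_add_complement[OF sg i] irr i
    by (simp add: signless_laplacian_index complement_def)
next
  case False
  thus ?thesis using i j by (auto simp: signless_laplacian_index complement_def)
qed

lemma quadratic_form_via_complement:
  assumes sg: "simple_graph n E" and x: "x \<in> carrier_vec n"
  shows "x \<bullet> (signless_laplacian n E *\<^sub>v x) =
    (\<Sum>i<n. x $ i)^2 + (real n - 2) * (x \<bullet> x) - edge_energy n (complement n E) x / 2"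
proof -
  let ?Q = "signless_laplacian n E" and ?M = "signless_laplacian n (complement n E)"
  have "x \<bullet> (?Q *\<^sub>v x) + x \<bullet> (?M *\<^sub>v x)
      = (\<Sum>i<n. \<Sum>j<n. x $ i * x $ j * (?Q $$ (i,j) + ?M $$ (i,j)))"
    unfolding quadratic_form_sum[OF signless_laplacian_carrier x]
    by (simp add: sum.distrib algebra_simps)
  also have "\<dots> = (\<Sum>i<n. \<Sum>j<n. x $ i * x $ j + (if i = j then (real n - 2) * (x $ i * x $ i) else 0))"
    by (intro sum.cong refl)
      (auto simp: signless_laplacian_add_complement[OF sg] algebra_simps)
  also have "\<dots> = (\<Sum>i<n. \<Sum>j<n. x $ i * x $ j) + (\<Sum>i<n. (real n - 2) * (x $ i * x $ i))"
    by (simp add: sum.distrib)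
  also have "(\<Sum>i<n. \<Sum>j<n. x $ i * x $ j) = (\<Sum>i<n. x $ i)^2"
    by (simp add: power2_eq_square sum_product)
  also have "(\<Sum>i<n. (real n - 2) * (x $ i * x $ i)) = (real n - 2) * (x \<bullet> x)"
    using x by (simp add: scalar_prod_def atLeast0LessThan sum_distrib_left)
  finally have "x \<bullet> (?Q *\<^sub>v x) + x \<bullet> (?M *\<^sub>v x) = (\<Sum>i<n. x $ i)^2 + (real n - 2) * (x \<bullet> x)" .
  moreover have "x \<bullet> (?M *\<^sub>v x) = edge_energy n (complement n E) x / 2"
    by (rule signless_laplacian_quadratic_form[OF x])
      (use sg in \<open>auto simp: simple_graph_def complement_def\<close>)
  ultimately show ?thesis by simp
qed

section \<open>Alternating vectors and bipartite components\<close>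

definition alternating :: "(nat \<Rightarrow> nat \<Rightarrow> bool) \<Rightarrow> real vec \<Rightarrow> bool" where
  "alternating F x \<longleftrightarrow> (\<forall>i j. F i j \<longrightarrow> x $ i + x $ j = 0)"

definition balanced_or_two_bipartite :: "nat \<Rightarrow> (nat \<Rightarrow> nat \<Rightarrow> bool) \<Rightarrow> bool" where
  "balanced_or_two_bipartite n F \<longleftrightarrow>
     (\<exists>C\<in>components n F. balanced_comp F C) \<or>
     (\<exists>C1\<in>components n F. \<exists>C2\<in>components n F. C1 \<noteq> C2 \<and> bipartite_comp F C1 \<and> bipartite_comp F C2)"

definition component_of :: "nat \<Rightarrow> (nat \<Rightarrow> nat \<Rightarrow> bool) \<Rightarrow> nat \<Rightarrow> nat set" where
  "component_of n F v = {u. u < n \<and> (adj_in n F)\<^sup>*\<^sup>* v u}"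

lemma components_eq: "components n F = {component_of n F v | v. v < n}"
  unfolding components_def component_of_def ..

definition sign_vec :: "nat \<Rightarrow> nat set \<Rightarrow> nat set \<Rightarrow> real vec" where
  "sign_vec n A B = vec n (\<lambda>i. if i \<in> A then 1 else if i \<in> B then -1 else 0)"

definition indicator_vec :: "nat \<Rightarrow> nat set \<Rightarrow> real vec" where
  "indicator_vec n C = vec n (\<lambda>i. if i \<in> C then 1 else 0)"

lemma sum_indicator:
  fixes n :: nat
  assumes "S \<subseteq> {..<n}"
  shows "(\<Sum>i<n. if i \<in> S then 1 else 0 :: real) = real (card S)"
proof -
  have "(\<Sum>i<n. if i \<in> S then 1 else 0 :: real) = real (card ({..<n} \<inter> S))"
    using sum.inter_restrict[OF finite_lessThan, of "\<lambda>_. 1::real" n S] by simp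
  also have "{..<n} \<inter> S = S" using assms by auto
  finally show ?thesis .
qed

text \<open>Two orthogonal nonzero vectors spanning a plane on which the edge energy of \<open>F\<close> is
  at most twice the squared coordinate sum; by the key identity this plane witnesses
  \<open>q\<^sub>2(G) \<ge> n - 2\<close> when \<open>F\<close> is the complement of \<open>G\<close>.\<close>
definition low_energy_plane :: "nat \<Rightarrow> (nat \<Rightarrow> nat \<Rightarrow> bool) \<Rightarrow> real vec \<Rightarrow> real vec \<Rightarrow> bool" where
  "low_energy_plane n F x y \<longleftrightarrow>
     x \<in> carrier_vec n \<and> y \<in> carrier_vec n \<and> x \<noteq> 0\<^sub>v n \<and> y \<noteq> 0\<^sub>v n \<and> x \<bullet> y = 0 \<and>
     (\<forall>a b. edge_energy n F (a \<cdot>\<^sub>v x + b \<cdot>\<^sub>v y) \<le> 2 * (\<Sum>i<n. (a \<cdot>\<^sub>v x + b \<cdot>\<^sub>v y) $ i)^2)"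

lemma double_sum_products:
  fixes p q r s :: "nat \<Rightarrow> real"
  shows "(\<Sum>i<n. \<Sum>j<n. c * (p i * q j + r i * s j)) =
    c * ((\<Sum>i<n. p i) * (\<Sum>j<n. q j) + (\<Sum>i<n. r i) * (\<Sum>j<n. s j))"
  unfolding sum_product by (simp add: sum.distrib sum_distrib_left distrib_left)

locale symmetric_graph =
  fixes n :: nat and F :: "nat \<Rightarrow> nat \<Rightarrow> bool"
  assumes sym: "F i j \<Longrightarrow> F j i" and edge_bounded: "F i j \<Longrightarrow> i < n \<and> j < n"

lemma symmetric_graph_complement: "simple_graph n E \<Longrightarrow> symmetric_graph n (complement n E)"
  by unfold_locales (auto simp: complement_def simple_graph_def)

context symmetric_graph
begin

lemma adj_in_iff: "adj_in n F u v \<longleftrightarrow> F u v"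
  unfolding adj_in_def using edge_bounded by auto

lemma reachable_sym: "(adj_in n F)\<^sup>*\<^sup>* u v \<Longrightarrow> (adj_in n F)\<^sup>*\<^sup>* v u"
proof (induction rule: rtranclp_induct)
  case (step y z)
  have "adj_in n F z y" using step(2) sym unfolding adj_in_iff by auto
  thus ?case using step(3) by (meson converse_rtranclp_into_rtranclp)
qed simp

lemma component_of_self: "v < n \<Longrightarrow> v \<in> component_of n F v"
  unfolding component_of_def by auto

lemma component_of_subset: "component_of n F v \<subseteq> {..<n}"
  unfolding component_of_def by auto

lemma finite_component_of: "finite (component_of n F v)"
  using component_of_subset finite_subset by blast

lemma component_of_edge: "u \<in> component_of n F v \<Longrightarrow> F u w \<Longrightarrow> w \<in> component_of n F v"
  unfolding component_of_def using edge_bounded adj_in_iff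
  by (auto intro: rtranclp.rtrancl_into_rtrancl)

lemma component_of_edge_iff: "F u w \<Longrightarrow> u \<in> component_of n F v \<longleftrightarrow> w \<in> component_of n F v"
  using component_of_edge sym by blast

lemma component_of_eq: "u \<in> component_of n F v \<Longrightarrow> component_of n F u = component_of n F v"
  unfolding component_of_def using reachable_sym by (auto intro: rtranclp_trans)

text \<open>Since every term is a square, the energy vanishes exactly on alternating vectors.\<close>
lemma edge_energy_eq_0_iff: "edge_energy n F x = 0 \<longleftrightarrow> alternating F x"
proof
  assume energy: "edge_energy n F x = 0"
  show "alternating F x" unfolding alternating_def
  proof (intro allI impI)
    fix i j assume e: "F i j"
    have ij: "i \<in> {..<n}" "j \<in> {..<n}" using edge_bounded[OF e] by auto
    have "\<forall>l\<in>{..<n}. (\<Sum>j<n. if F l j then (x $ l + x $ j)^2 else 0) = 0"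
      using energy unfolding edge_energy_def
      by (subst sum_nonneg_eq_0_iff[symmetric]) (auto intro!: sum_nonneg)
    hence "\<forall>l\<in>{..<n}. (if F i l then (x $ i + x $ l)^2 else (0::real)) = 0"
      using ij by (subst sum_nonneg_eq_0_iff[symmetric]) auto
    hence "(if F i j then (x $ i + x $ j)^2 else (0::real)) = 0" using ij by blast
    thus "x $ i + x $ j = 0" using e by simp
  qed
next
  assume "alternating F x"
  thus "edge_energy n F x = 0" unfolding edge_energy_def alternating_def by simp
qed

text \<open>Along a path an alternating vector only changes sign.\<close>
lemma alternating_on_component:
  assumes alt: "alternating F x" and u: "u \<in> component_of n F k"
  shows "x $ u = x $ k \<or> x $ u = - x $ k"
proof -
  have "(adj_in n F)\<^sup>*\<^sup>* k u" using u unfolding component_of_def by auto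
  thus ?thesis
  proof (induction rule: rtranclp_induct)
    case (step y z)
    have "x $ y + x $ z = 0" using alt step(2) adj_in_iff unfolding alternating_def by auto
    thus ?case using step(3) by auto
  qed simp
qed

lemma alternating_bipartition:
  assumes alt: "alternating F x" and xk: "x $ k \<noteq> 0"
  defines "A \<equiv> {u \<in> component_of n F k. x $ u = x $ k}"
    and "B \<equiv> {u \<in> component_of n F k. x $ u = - x $ k}"
  shows "bipartition F (component_of n F k) A B"
    and "(\<Sum>u\<in>component_of n F k. x $ u) = x $ k * (real (card A) - real (card B))"
proof -
  have disj: "A \<inter> B = {}" unfolding A_def B_def using xk by auto
  have union: "A \<union> B = component_of n F k"
    unfolding A_def B_def using alternating_on_component[OF alt] by auto
  show "bipartition F (component_of n F k) A B"
    unfolding bipartition_def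
  proof (intro conjI disj union ballI impI)
    fix u v assume "u \<in> component_of n F k" "v \<in> component_of n F k" "F u v"
    moreover have "x $ u + x $ v = 0" using alt \<open>F u v\<close> unfolding alternating_def by auto
    ultimately show "(u \<in> A) = (v \<in> B)" unfolding A_def B_def by auto
  qed
  have fin: "finite A" "finite B" unfolding A_def B_def using finite_component_of by auto
  have "(\<Sum>u\<in>component_of n F k. x $ u) = (\<Sum>u\<in>A. x $ u) + (\<Sum>u\<in>B. x $ u)"
    unfolding union[symmetric] using sum.union_disjoint[OF fin disj] by simp
  also have "\<dots> = (\<Sum>u\<in>A. x $ k) + (\<Sum>u\<in>B. - x $ k)"
    unfolding A_def B_def by simp
  also have "\<dots> = x $ k * (real (card A) - real (card B))" by (simp add: algebra_simps)
  finally show "(\<Sum>u\<in>component_of n F k. x $ u) = x $ k * (real (card A) - real (card B))" .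
qed

text \<open>A nonzero alternating vector with zero sum forces a balanced bipartite component or
  two bipartite components: either the component of a support vertex is balanced, or the
  vector has nonzero sum on it and must be supported on a second component as well.\<close>
lemma alternating_zero_sum_imp_condition:
  assumes alt: "alternating F x" and k: "k < n" and xk: "x $ k \<noteq> 0"
    and zero_sum: "(\<Sum>i<n. x $ i) = 0"
  shows "balanced_or_two_bipartite n F"
proof -
  define C where "C = component_of n F k"
  define A where "A = {u \<in> C. x $ u = x $ k}"
  define B where "B = {u \<in> C. x $ u = - x $ k}"
  have bip: "bipartition F C A B" and sum_C: "(\<Sum>u\<in>C. x $ u) = x $ k * (real (card A) - real (card B))"
    using alternating_bipartition[OF alt xk] unfolding A_def B_def C_def by auto
  have C: "C \<in> components n F" unfolding components_eq C_def using k by auto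
  show ?thesis
  proof (cases "card A = card B")
    case True
    hence "balanced_comp F C" using bip unfolding balanced_comp_def by auto
    thus ?thesis using C unfolding balanced_or_two_bipartite_def by auto
  next
    case False
    hence "(\<Sum>u\<in>C. x $ u) \<noteq> 0" using sum_C xk by auto
    moreover have "(\<Sum>i<n. x $ i) = (\<Sum>u\<in>C. x $ u) + (\<Sum>u\<in>{..<n} - C. x $ u)"
      using component_of_subset[of k] unfolding C_def
      by (metis add.commute finite_lessThan sum.subset_diff)
    ultimately have "(\<Sum>u\<in>{..<n} - C. x $ u) \<noteq> 0" using zero_sum by auto
    then obtain w where w: "w \<in> {..<n} - C" "x $ w \<noteq> 0" by (meson sum.neutral)
    define C2 where "C2 = component_of n F w"
    have "C2 \<in> components n F" unfolding components_eq C2_def using w by auto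
    moreover have "C2 \<noteq> C" using component_of_self[of w] w unfolding C2_def by auto
    moreover have "bipartite_comp F C2" unfolding bipartite_comp_def C2_def
      using alternating_bipartition(1)[OF alt w(2)] by blast
    moreover have "bipartite_comp F C" unfolding bipartite_comp_def using bip by blast
    ultimately show ?thesis using C unfolding balanced_or_two_bipartite_def by blast
  qed
qed

lemma sign_vec_alternating:
  assumes bip: "bipartition F (component_of n F v) A B"
  shows "alternating F (sign_vec n A B)"
  unfolding alternating_def
proof (intro allI impI)
  fix i j assume e: "F i j"
  have ij: "i < n" "j < n" using edge_bounded[OF e] by auto
  have disj: "A \<inter> B = {}" and union: "A \<union> B = component_of n F v"
    and cross: "\<And>u w. u \<in> component_of n F v \<Longrightarrow> w \<in> component_of n F v \<Longrightarrow> F u w \<Longrightarrow> (u \<in> A \<longleftrightarrow> w \<in> B)"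
    using bip unfolding bipartition_def by auto
  show "sign_vec n A B $ i + sign_vec n A B $ j = 0"
  proof (cases "i \<in> component_of n F v")
    case True
    hence j: "j \<in> component_of n F v" using component_of_edge e by blast
    have "i \<in> A \<longleftrightarrow> j \<in> B" using cross[OF True j e] .
    thus ?thesis using True j disj union ij unfolding sign_vec_def by auto
  next
    case False
    hence "j \<notin> component_of n F v" using component_of_edge_iff[OF e] by blast
    thus ?thesis using False union ij unfolding sign_vec_def by auto
  qed
qed

lemma sign_vec_nonzero:
  assumes bip: "bipartition F (component_of n F v) A B" and v: "v < n"
  shows "sign_vec n A B \<noteq> 0\<^sub>v n"
proof
  assume zero: "sign_vec n A B = 0\<^sub>v n"
  have "v \<in> A \<union> B" using bip component_of_self[OF v] unfolding bipartition_def by auto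
  hence "sign_vec n A B $ v \<noteq> 0" using v unfolding sign_vec_def by auto
  thus False using zero v by auto
qed

lemma sign_vec_outside:
  assumes "bipartition F (component_of n F v) A B" and "i \<notin> component_of n F v" and "i < n"
  shows "sign_vec n A B $ i = 0"
  using assms unfolding bipartition_def sign_vec_def by auto

text \<open>On a combination of the sign vector and the indicator vector of a bipartite component
  only the edges of the component contribute, each \<open>4 b\<^sup>2\<close>, and they all run between the
  two classes.\<close>
lemma edge_energy_sign_indicator:
  assumes bip: "bipartition F (component_of n F v0) A B"
  shows "edge_energy n F (a \<cdot>\<^sub>v sign_vec n A B + b \<cdot>\<^sub>v indicator_vec n (component_of n F v0))
    \<le> 8 * b^2 * (real (card A) * real (card B))"
proof -
  let ?C = "component_of n F v0"
  define v where "v = a \<cdot>\<^sub>v sign_vec n A B + b \<cdot>\<^sub>v indicator_vec n ?C"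
  define between where "between i j = (if i \<in> A then 1 else 0) * (if j \<in> B then 1 else 0)
      + (if i \<in> B then 1 else 0) * (if j \<in> A then 1 else (0::real))" for i j
  have disj: "A \<inter> B = {}" and union: "A \<union> B = ?C"
    using bip unfolding bipartition_def by auto
  have AB: "A \<subseteq> {..<n}" "B \<subseteq> {..<n}" using union component_of_subset by auto
  have vi: "v $ i = a * sign_vec n A B $ i + b * indicator_vec n ?C $ i" if "i < n" for i
    unfolding v_def using that by (simp add: sign_vec_def indicator_vec_def)
  have per_edge: "(if F i j then (v $ i + v $ j)^2 else 0) \<le> 4 * b^2 * between i j"
    if ij: "i < n" "j < n" for i j
  proof (cases "F i j")
    case e: True
    have alt: "sign_vec n A B $ i + sign_vec n A B $ j = 0"
      using sign_vec_alternating[OF bip] e unfolding alternating_def by blast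
    show ?thesis
    proof (cases "i \<in> ?C")
      case True
      hence j: "j \<in> ?C" using component_of_edge e by blast
      have "i \<in> A \<longleftrightarrow> j \<in> B" using bip True j e unfolding bipartition_def by auto
      hence "between i j = 1" unfolding between_def using True j union disj by auto
      moreover have "v $ i + v $ j = a * (sign_vec n A B $ i + sign_vec n A B $ j) + 2 * b"
        using vi ij True j unfolding indicator_vec_def by (simp add: algebra_simps)
      hence "v $ i + v $ j = 2 * b" using alt by simp
      ultimately show ?thesis using e by (simp add: power2_eq_square)
    next
      case False
      hence "j \<notin> ?C" using component_of_edge_iff[OF e] by blast
      hence "v $ i + v $ j = 0"
        using vi ij False sign_vec_outside[OF bip] unfolding indicator_vec_def by simp
      thus ?thesis using e by (simp add: between_def)
    qed
  qed (simp add: between_def)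
  have "edge_energy n F v \<le> (\<Sum>i<n. \<Sum>j<n. 4 * b^2 * between i j)"
    unfolding edge_energy_def by (intro sum_mono) (use per_edge in auto)
  also have "\<dots> = 4 * b^2 * (2 * (real (card A) * real (card B)))"
    unfolding between_def double_sum_products sum_indicator[OF AB(1)] sum_indicator[OF AB(2)]
    by simp
  finally show ?thesis unfolding v_def by simp
qed

lemma balanced_component_plane:
  assumes v0: "v0 < n" and bip: "bipartition F (component_of n F v0) A B"
    and balanced: "card A = card B"
  shows "\<exists>x y. low_energy_plane n F x y"
proof -
  let ?C = "component_of n F v0"
  have disj: "A \<inter> B = {}" and union: "A \<union> B = ?C" using bip unfolding bipartition_def by auto
  have AB: "A \<subseteq> {..<n}" "B \<subseteq> {..<n}" using union component_of_subset by auto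
  define x where "x = sign_vec n A B"
  define y where "y = indicator_vec n ?C"
  have xy_carrier: "x \<in> carrier_vec n" "y \<in> carrier_vec n"
    unfolding x_def y_def sign_vec_def indicator_vec_def by auto
  have "y $ v0 = 1" using component_of_self[OF v0] v0 unfolding y_def indicator_vec_def by simp
  hence y0: "y \<noteq> 0\<^sub>v n" using v0 by auto
  have sum_x: "(\<Sum>i<n. x $ i) = 0"
  proof -
    have "(\<Sum>i<n. x $ i) = (\<Sum>i<n. (if i \<in> A then 1 else 0) - (if i \<in> B then 1 else 0 :: real))"
      unfolding x_def sign_vec_def using disj by (intro sum.cong) auto
    also have "\<dots> = real (card A) - real (card B)"
      by (simp add: sum_subtractf sum_indicator[OF AB(1)] sum_indicator[OF AB(2)])
    finally show ?thesis using balanced by simp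
  qed
  have "x \<bullet> y = (\<Sum>i<n. x $ i)" unfolding scalar_prod_def
    by (auto simp: atLeast0LessThan y_def indicator_vec_def x_def sign_vec_def union[symmetric]
        intro!: sum.cong)
  hence orth: "x \<bullet> y = 0" using sum_x by simp
  have "finite A" "finite B" using AB finite_subset by auto
  hence card_C: "card ?C = 2 * card A"
    unfolding union[symmetric] using card_Un_disjoint[of A B] disj balanced by simp
  have "edge_energy n F (a \<cdot>\<^sub>v x + b \<cdot>\<^sub>v y) \<le> 2 * (\<Sum>i<n. (a \<cdot>\<^sub>v x + b \<cdot>\<^sub>v y) $ i)^2" for a b
  proof -
    have "(\<Sum>i<n. (a \<cdot>\<^sub>v x + b \<cdot>\<^sub>v y) $ i) = a * (\<Sum>i<n. x $ i) + b * (\<Sum>i<n. y $ i)"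
      using xy_carrier by (simp add: sum.distrib sum_distrib_left)
    also have "\<dots> = b * (2 * real (card A))"
      unfolding sum_x using sum_indicator[OF component_of_subset] card_C
      by (simp add: y_def indicator_vec_def)
    finally have "2 * (\<Sum>i<n. (a \<cdot>\<^sub>v x + b \<cdot>\<^sub>v y) $ i)^2 = 8 * b^2 * (real (card A) * real (card B))"
      using balanced by (simp add: power2_eq_square)
    thus ?thesis using edge_energy_sign_indicator[OF bip, of a b] unfolding x_def y_def by linarith
  qed
  thus ?thesis unfolding low_energy_plane_def
    using xy_carrier sign_vec_nonzero[OF bip v0] y0 orth unfolding x_def by blast
qed

lemma alternating_combination:
  assumes x: "x \<in> carrier_vec n" and y: "y \<in> carrier_vec n"
    and "alternating F x" and "alternating F y"
  shows "alternating F (a \<cdot>\<^sub>v x + b \<cdot>\<^sub>v y)"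
  unfolding alternating_def
proof (intro allI impI)
  fix i j assume e: "F i j"
  have "i < n" "j < n" using edge_bounded[OF e] by auto
  hence "(a \<cdot>\<^sub>v x + b \<cdot>\<^sub>v y) $ i + (a \<cdot>\<^sub>v x + b \<cdot>\<^sub>v y) $ j = a * (x $ i + x $ j) + b * (y $ i + y $ j)"
    using x y by (simp add: algebra_simps)
  also have "\<dots> = 0" using assms(3,4) e unfolding alternating_def by simp
  finally show "(a \<cdot>\<^sub>v x + b \<cdot>\<^sub>v y) $ i + (a \<cdot>\<^sub>v x + b \<cdot>\<^sub>v y) $ j = 0" .
qed

text \<open>Sign vectors of bipartitions of distinct components have disjoint supports.\<close>
lemma sign_vecs_orthogonal:
  assumes ne: "component_of n F v1 \<noteq> component_of n F v2"
    and b1: "bipartition F (component_of n F v1) A1 B1"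
    and b2: "bipartition F (component_of n F v2) A2 B2"
  shows "sign_vec n A1 B1 \<bullet> sign_vec n A2 B2 = 0"
proof -
  have disj: "i \<notin> component_of n F v2" if "i \<in> component_of n F v1" for i
    using component_of_eq ne that by metis
  have "sign_vec n A1 B1 \<bullet> sign_vec n A2 B2 = (\<Sum>i<n. sign_vec n A1 B1 $ i * sign_vec n A2 B2 $ i)"
    unfolding scalar_prod_def by (simp add: atLeast0LessThan sign_vec_def)
  also have "\<dots> = 0"
  proof (intro sum.neutral ballI)
    fix i assume i: "i \<in> {..<n}"
    show "sign_vec n A1 B1 $ i * sign_vec n A2 B2 $ i = 0"
    proof (cases "i \<in> component_of n F v1")
      case True
      thus ?thesis using disj sign_vec_outside[OF b2] i by auto
    next
      case False
      thus ?thesis using sign_vec_outside[OF b1] i by auto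
    qed
  qed
  finally show ?thesis .
qed

text \<open>Two distinct bipartite components: their sign vectors span a plane of alternating
  vectors, i.e. of zero edge energy.\<close>
lemma two_bipartite_components_plane:
  assumes v1: "v1 < n" and v2: "v2 < n" and ne: "component_of n F v1 \<noteq> component_of n F v2"
    and b1: "bipartition F (component_of n F v1) A1 B1"
    and b2: "bipartition F (component_of n F v2) A2 B2"
  shows "\<exists>x y. low_energy_plane n F x y"
proof -
  define x where "x = sign_vec n A1 B1"
  define y where "y = sign_vec n A2 B2"
  have xy_carrier: "x \<in> carrier_vec n" "y \<in> carrier_vec n"
    unfolding x_def y_def sign_vec_def by auto
  have "alternating F (a \<cdot>\<^sub>v x + b \<cdot>\<^sub>v y)" for a b
    using alternating_combination[OF xy_carrier] sign_vec_alternating[OF b1]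
      sign_vec_alternating[OF b2] unfolding x_def y_def by blast
  hence energy: "edge_energy n F (a \<cdot>\<^sub>v x + b \<cdot>\<^sub>v y) = 0" for a b
    using edge_energy_eq_0_iff by blast
  have "x \<noteq> 0\<^sub>v n" "y \<noteq> 0\<^sub>v n" "x \<bullet> y = 0"
    unfolding x_def y_def using sign_vec_nonzero[OF b1 v1] sign_vec_nonzero[OF b2 v2]
      sign_vecs_orthogonal[OF ne b1 b2] by auto
  hence "low_energy_plane n F x y"
    unfolding low_energy_plane_def using xy_carrier energy by simp
  thus ?thesis by blast
qed

lemma condition_imp_low_energy_plane:
  assumes "balanced_or_two_bipartite n F"
  shows "\<exists>x y. low_energy_plane n F x y"
  using assms unfolding balanced_or_two_bipartite_def
proof (elim disjE)
  assume "\<exists>C\<in>components n F. balanced_comp F C"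
  then obtain v0 A B where "v0 < n" "bipartition F (component_of n F v0) A B" "card A = card B"
    unfolding components_eq balanced_comp_def by auto
  thus ?thesis by (rule balanced_component_plane)
next
  assume "\<exists>C1\<in>components n F. \<exists>C2\<in>components n F. C1 \<noteq> C2 \<and> bipartite_comp F C1 \<and> bipartite_comp F C2"
  then obtain v1 v2 A1 B1 A2 B2 where "v1 < n" "v2 < n"
    "component_of n F v1 \<noteq> component_of n F v2"
    "bipartition F (component_of n F v1) A1 B1" "bipartition F (component_of n F v2) A2 B2"
    unfolding components_eq bipartite_comp_def by blast
  thus ?thesis by (rule two_bipartite_components_plane)
qed

end

lemma scalar_prod_ones:
  fixes x :: "real vec"
  shows "x \<in> carrier_vec n \<Longrightarrow> x \<bullet> vec n (\<lambda>_. 1) = (\<Sum>i<n. x $ i)"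
  unfolding scalar_prod_def by (auto simp: atLeast0LessThan)

text \<open>Upper bound \<open>q\<^sub>2(G) \<le> n - 2\<close>: on the hyperplane of vectors with zero sum, the key
  identity shows that the Rayleigh quotient of \<open>Q(G)\<close> is at most \<open>n - 2\<close>.\<close>
lemma second_eigenvalue_le:
  assumes sg: "simple_graph n E" and n: "2 \<le> n"
  shows "second_eigenvalue (signless_laplacian n E) \<le> real n - 2"
proof -
  let ?Q = "signless_laplacian n E"
  obtain x where x: "x \<in> carrier_vec n" "x \<noteq> 0\<^sub>v n" "x \<bullet> vec n (\<lambda>_. 1) = 0"
    and rayleigh: "second_eigenvalue ?Q * (x \<bullet> x) \<le> x \<bullet> (?Q *\<^sub>v x)"
    using second_eigenvalue_max_min[OF signless_laplacian_symmetric[OF sg] n, of "vec n (\<lambda>_. 1)"]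
    by auto
  have "x \<bullet> (?Q *\<^sub>v x) \<le> (real n - 2) * (x \<bullet> x)"
    using quadratic_form_via_complement[OF sg x(1)] scalar_prod_ones[OF x(1)] x(3)
      edge_energy_nonneg[of n "complement n E" x] by simp
  with rayleigh have "second_eigenvalue ?Q * (x \<bullet> x) \<le> (real n - 2) * (x \<bullet> x)" by linarith
  thus ?thesis using scalar_prod_self_pos[OF x(1,2)] by simp
qed

text \<open>If \<open>q\<^sub>2(G) = n - 2\<close>, a zero-sum vector attaining the bound has zero edge energy in the
  complement, i.e. it is alternating there.\<close>
lemma second_eigenvalue_eq_imp_condition:
  assumes sg: "simple_graph n E" and n: "2 \<le> n"
    and eq: "second_eigenvalue (signless_laplacian n E) = real n - 2"
  shows "balanced_or_two_bipartite n (complement n E)"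
proof -
  let ?Q = "signless_laplacian n E" and ?F = "complement n E"
  interpret symmetric_graph n ?F by (rule symmetric_graph_complement[OF sg])
  obtain x where x: "x \<in> carrier_vec n" "x \<noteq> 0\<^sub>v n" "x \<bullet> vec n (\<lambda>_. 1) = 0"
    and rayleigh: "second_eigenvalue ?Q * (x \<bullet> x) \<le> x \<bullet> (?Q *\<^sub>v x)"
    using second_eigenvalue_max_min[OF signless_laplacian_symmetric[OF sg] n, of "vec n (\<lambda>_. 1)"]
    by auto
  have zero_sum: "(\<Sum>i<n. x $ i) = 0" using scalar_prod_ones[OF x(1)] x(3) by simp
  have "edge_energy n ?F x \<le> 0"
    using rayleigh quadratic_form_via_complement[OF sg x(1)] zero_sum unfolding eq by simp
  hence "alternating ?F x"
    using edge_energy_nonneg[of n ?F x] edge_energy_eq_0_iff by simp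
  moreover obtain k where "k < n" "x $ k \<noteq> 0"
    using x(1,2) by (metis eq_vecI carrier_vecD index_zero_vec)
  ultimately show ?thesis using alternating_zero_sum_imp_condition zero_sum by blast
qed

text \<open>Conversely the condition yields a plane on which the Rayleigh quotient of \<open>Q(G)\<close> is
  at least \<open>n - 2\<close>, so \<open>q\<^sub>2(G) \<ge> n - 2\<close>.\<close>
lemma condition_imp_second_eigenvalue_ge:
  assumes sg: "simple_graph n E" and n: "2 \<le> n"
    and cond: "balanced_or_two_bipartite n (complement n E)"
  shows "real n - 2 \<le> second_eigenvalue (signless_laplacian n E)"
proof -
  let ?Q = "signless_laplacian n E" and ?F = "complement n E"
  interpret symmetric_graph n ?F by (rule symmetric_graph_complement[OF sg])
  obtain x y where plane: "low_energy_plane n ?F x y"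
    using condition_imp_low_energy_plane[OF cond] by blast
  hence xy: "x \<in> carrier_vec n" "y \<in> carrier_vec n" "x \<noteq> 0\<^sub>v n" "y \<noteq> 0\<^sub>v n" "x \<bullet> y = 0"
    unfolding low_energy_plane_def by auto
  obtain a b where v0: "a \<cdot>\<^sub>v x + b \<cdot>\<^sub>v y \<noteq> 0\<^sub>v n"
    and rayleigh: "(a \<cdot>\<^sub>v x + b \<cdot>\<^sub>v y) \<bullet> (?Q *\<^sub>v (a \<cdot>\<^sub>v x + b \<cdot>\<^sub>v y))
      \<le> second_eigenvalue ?Q * ((a \<cdot>\<^sub>v x + b \<cdot>\<^sub>v y) \<bullet> (a \<cdot>\<^sub>v x + b \<cdot>\<^sub>v y))"
    using second_eigenvalue_min_max[OF signless_laplacian_symmetric[OF sg] n xy] by blast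
  define v where "v = a \<cdot>\<^sub>v x + b \<cdot>\<^sub>v y"
  have v: "v \<in> carrier_vec n" unfolding v_def using xy by auto
  have "edge_energy n ?F v \<le> 2 * (\<Sum>i<n. v $ i)^2"
    using plane unfolding low_energy_plane_def v_def by blast
  hence "(real n - 2) * (v \<bullet> v) \<le> v \<bullet> (?Q *\<^sub>v v)"
    using quadratic_form_via_complement[OF sg v] by simp
  with rayleigh have "(real n - 2) * (v \<bullet> v) \<le> second_eigenvalue ?Q * (v \<bullet> v)"
    unfolding v_def by simp
  thus ?thesis using scalar_prod_self_pos[OF v v0[folded v_def]] by simp
qed

theorem theorem1:
  fixes n :: nat and E :: "nat \<Rightarrow> nat \<Rightarrow> bool"
  assumes "simple_graph n E" and "n \<ge> 2"
  shows "q_eig 2 n E = real n - 2 \<longleftrightarrow>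
    ((\<exists>C\<in>components n (complement n E). balanced_comp (complement n E) C) \<or>
     (\<exists>C1\<in>components n (complement n E). \<exists>C2\<in>components n (complement n E).
        C1 \<noteq> C2 \<and> bipartite_comp (complement n E) C1 \<and> bipartite_comp (complement n E) C2))"
proof -
  have "q_eig 2 n E = second_eigenvalue (signless_laplacian n E)"
    unfolding q_eig_def second_eigenvalue_def by simp
  thus ?thesis
    unfolding balanced_or_two_bipartite_def[symmetric]
    using second_eigenvalue_le[OF assms] second_eigenvalue_eq_imp_condition[OF assms]
      condition_imp_second_eigenvalue_ge[OF assms] by fastforce
qed

end
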